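(* There exist an (infinite) distributive meet-complemented lattice $A$ and an element $a\in A$ such that $\Box a$ does not exist, i.e., the set $\{b\in A: a\vee\neg b=1\}$ has no maximum.
   Context: A meet-complemented lattice is a lattice $(L,\le)$ such that for every $a\in L$ the element $\neg a=\max\{b\in L: a\wedge b\le c\ \text{for all } c\in L\}$ exists; it is bounded with top $1$. $\Box a$ denotes $\max\{b\in L: a\vee\neg b=1\}$ when it exists. *)

theory Defs
  imports Main
begin

definition po_on :: "'a set \<Rightarrow> ('a \<Rightarrow> 'a \<Rightarrow> bool) \<Rightarrow> bool" where
  "po_on L le \<longleftrightarrow> (\<forall>x\<in>L. le x x) \<and> (\<forall>x\<in>L. \<forall>y\<in>L. le x y \<and> le y x \<longrightarrow> x = y)
     \<and> (\<forall>x\<in>L. \<forall>y\<in>L. \<forall>z\<in>L. le x y \<and> le y z \<longrightarrow> le x z)"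

definition is_lub :: "'a set \<Rightarrow> ('a \<Rightarrow> 'a \<Rightarrow> bool) \<Rightarrow> 'a set \<Rightarrow> 'a \<Rightarrow> bool" where
  "is_lub L le S x \<longleftrightarrow> x \<in> L \<and> (\<forall>y\<in>S. le y x) \<and> (\<forall>z\<in>L. (\<forall>y\<in>S. le y z) \<longrightarrow> le x z)"

definition is_glb :: "'a set \<Rightarrow> ('a \<Rightarrow> 'a \<Rightarrow> bool) \<Rightarrow> 'a set \<Rightarrow> 'a \<Rightarrow> bool" where
  "is_glb L le S x \<longleftrightarrow> x \<in> L \<and> (\<forall>y\<in>S. le x y) \<and> (\<forall>z\<in>L. (\<forall>y\<in>S. le z y) \<longrightarrow> le z x)"

definition is_max :: "('a \<Rightarrow> 'a \<Rightarrow> bool) \<Rightarrow> 'a set \<Rightarrow> 'a \<Rightarrow> bool" where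
  "is_max le S x \<longleftrightarrow> x \<in> S \<and> (\<forall>y\<in>S. le y x)"

definition lattice_on :: "'a set \<Rightarrow> ('a \<Rightarrow> 'a \<Rightarrow> bool) \<Rightarrow> bool" where
  "lattice_on L le \<longleftrightarrow> po_on L le \<and>
     (\<forall>a\<in>L. \<forall>b\<in>L. (\<exists>x. is_lub L le {a, b} x) \<and> (\<exists>x. is_glb L le {a, b} x))"

definition lmeet :: "'a set \<Rightarrow> ('a \<Rightarrow> 'a \<Rightarrow> bool) \<Rightarrow> 'a \<Rightarrow> 'a \<Rightarrow> 'a" where
  "lmeet L le a b = (THE x. is_glb L le {a, b} x)"

definition ljoin :: "'a set \<Rightarrow> ('a \<Rightarrow> 'a \<Rightarrow> bool) \<Rightarrow> 'a \<Rightarrow> 'a \<Rightarrow> 'a" where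
  "ljoin L le a b = (THE x. is_lub L le {a, b} x)"

definition ltop :: "'a set \<Rightarrow> ('a \<Rightarrow> 'a \<Rightarrow> bool) \<Rightarrow> 'a" where
  "ltop L le = (THE x. is_max le L x)"

definition distributive_lattice_on :: "'a set \<Rightarrow> ('a \<Rightarrow> 'a \<Rightarrow> bool) \<Rightarrow> bool" where
  "distributive_lattice_on L le \<longleftrightarrow> lattice_on L le \<and>
     (\<forall>a\<in>L. \<forall>b\<in>L. \<forall>c\<in>L.
        lmeet L le a (ljoin L le b c) = ljoin L le (lmeet L le a b) (lmeet L le a c))"

definition negset :: "'a set \<Rightarrow> ('a \<Rightarrow> 'a \<Rightarrow> bool) \<Rightarrow> 'a \<Rightarrow> 'a set" where
  "negset L le a = {b \<in> L. \<forall>c\<in>L. le (lmeet L le a b) c}"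

definition lneg :: "'a set \<Rightarrow> ('a \<Rightarrow> 'a \<Rightarrow> bool) \<Rightarrow> 'a \<Rightarrow> 'a" where
  "lneg L le a = (THE x. is_max le (negset L le a) x)"

definition meet_complemented_on :: "'a set \<Rightarrow> ('a \<Rightarrow> 'a \<Rightarrow> bool) \<Rightarrow> bool" where
  "meet_complemented_on L le \<longleftrightarrow> lattice_on L le \<and>
     (\<forall>a\<in>L. \<exists>x. is_max le (negset L le a) x)"

definition boxset :: "'a set \<Rightarrow> ('a \<Rightarrow> 'a \<Rightarrow> bool) \<Rightarrow> 'a \<Rightarrow> 'a set" where
  "boxset L le a = {b \<in> L. ljoin L le a (lneg L le b) = ltop L le}"

end

theory Submission
  imports Defs
begin

text \<open>Take the sets that avoid a point p together with the cofinite sets that contain p, ordered by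
inclusion. Meets and joins are intersections and unions, and the pseudocomplement of B is its
complement, with p removed unless the complement is cofinite. Hence for a = -{p} the condition
a \<union> \<not>B = UNIV holds exactly for the finite sets B avoiding p; over an infinite type these form
an upward directed family without a largest member.\<close>

lemma is_max_subset_unique: "is_max (\<subseteq>) S x \<Longrightarrow> is_max (\<subseteq>) S y \<Longrightarrow> x = y"
  unfolding is_max_def by blast

lemma the_is_max_subset:
  assumes "is_max (\<subseteq>) S x"
  shows "(THE x. is_max (\<subseteq>) S x) = x"
  using assms by (rule the_equality) (rule is_max_subset_unique[OF _ assms])

locale set_lattice =
  fixes L :: "'a set set"
  assumes Int_mem: "A \<in> L \<Longrightarrow> B \<in> L \<Longrightarrow> A \<inter> B \<in> L"
    and Un_mem: "A \<in> L \<Longrightarrow> B \<in> L \<Longrightarrow> A \<union> B \<in> L"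
begin

lemma is_glb_iff: "A \<in> L \<Longrightarrow> B \<in> L \<Longrightarrow> is_glb L (\<subseteq>) {A, B} x \<longleftrightarrow> x = A \<inter> B"
  unfolding is_glb_def by (auto dest: Int_mem)

lemma is_lub_iff: "A \<in> L \<Longrightarrow> B \<in> L \<Longrightarrow> is_lub L (\<subseteq>) {A, B} x \<longleftrightarrow> x = A \<union> B"
  unfolding is_lub_def by (auto dest: Un_mem)

lemma lmeet_eq: "A \<in> L \<Longrightarrow> B \<in> L \<Longrightarrow> lmeet L (\<subseteq>) A B = A \<inter> B"
  unfolding lmeet_def by (rule the_equality) (simp_all add: is_glb_iff)

lemma ljoin_eq: "A \<in> L \<Longrightarrow> B \<in> L \<Longrightarrow> ljoin L (\<subseteq>) A B = A \<union> B"
  unfolding ljoin_def by (rule the_equality) (simp_all add: is_lub_iff)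

lemma lattice: "lattice_on L (\<subseteq>)"
  unfolding lattice_on_def po_on_def using is_glb_iff is_lub_iff by blast

lemma distributive_lattice: "distributive_lattice_on L (\<subseteq>)"
  unfolding distributive_lattice_on_def
  by (simp add: lattice lmeet_eq ljoin_eq Int_mem Un_mem Int_Un_distrib)

lemma ltop_eq: "UNIV \<in> L \<Longrightarrow> ltop L (\<subseteq>) = UNIV"
  unfolding ltop_def by (rule the_is_max_subset) (simp add: is_max_def)

lemma negset_eq:
  assumes "{} \<in> L" and "A \<in> L"
  shows "negset L (\<subseteq>) A = {B \<in> L. A \<inter> B = {}}"
proof -
  have "(\<forall>C\<in>L. A \<inter> B \<subseteq> C) \<longleftrightarrow> A \<inter> B = {}" for B
    using assms(1) by blast
  with assms(2) show ?thesis
    unfolding negset_def by (auto simp: lmeet_eq)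
qed

end

definition avoiding_or_cofinite :: "'a \<Rightarrow> 'a set set" where
  "avoiding_or_cofinite p = {S. p \<notin> S} \<union> {S. p \<in> S \<and> finite (- S)}"

definition pseudo_compl :: "'a \<Rightarrow> 'a set \<Rightarrow> 'a set" where
  "pseudo_compl p B = (if - B \<in> avoiding_or_cofinite p then - B else - B - {p})"

interpretation avoiding_or_cofinite: set_lattice "avoiding_or_cofinite p"
  by unfold_locales (auto simp: avoiding_or_cofinite_def Compl_Int Compl_Un)

lemma avoiding_or_cofinite_UNIV: "UNIV \<in> avoiding_or_cofinite p"
  and avoiding_or_cofinite_empty: "{} \<in> avoiding_or_cofinite p"
  and avoiding_or_cofinite_avoiding: "p \<notin> S \<Longrightarrow> S \<in> avoiding_or_cofinite p"
  unfolding avoiding_or_cofinite_def by auto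

lemma infinite_avoiding_or_cofinite:
  assumes "infinite (UNIV :: 'a set)"
  shows "infinite (avoiding_or_cofinite (p :: 'a))"
proof
  assume "finite (avoiding_or_cofinite p)"
  moreover have "(\<lambda>x. {x}) ` (- {p}) \<subseteq> avoiding_or_cofinite p"
    by (auto intro: avoiding_or_cofinite_avoiding)
  ultimately have "finite ((\<lambda>x. {x}) ` (- {p}))"
    by (rule finite_subset[rotated])
  hence "finite (- {p})"
    by (rule finite_imageD) (simp add: inj_on_def)
  with assms show False
    by (simp add: Compl_eq_Diff_UNIV)
qed

lemma is_max_negset_pseudo_compl:
  assumes A: "A \<in> avoiding_or_cofinite p"
  shows "is_max (\<subseteq>) (negset (avoiding_or_cofinite p) (\<subseteq>) A) (pseudo_compl p A)"
proof -
  have "B \<subseteq> pseudo_compl p A" if B: "B \<in> avoiding_or_cofinite p" "A \<inter> B = {}" for B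
  proof (cases "p \<in> B")
    case True
    \<comment> \<open>then A lies in the finite complement of B and avoids p, so -A is cofinite and contains p\<close>
    with B have "finite A" "p \<notin> A"
      unfolding avoiding_or_cofinite_def by (auto intro: finite_subset[of A "- B"])
    hence "- A \<in> avoiding_or_cofinite p"
      unfolding avoiding_or_cofinite_def by simp
    with B show ?thesis
      unfolding pseudo_compl_def by auto
  next
    case False
    with B show ?thesis
      unfolding pseudo_compl_def by auto
  qed
  moreover have "pseudo_compl p A \<in> avoiding_or_cofinite p"
    unfolding pseudo_compl_def by (auto intro: avoiding_or_cofinite_avoiding)
  moreover have "A \<inter> pseudo_compl p A = {}"
    unfolding pseudo_compl_def by auto
  ultimately show ?thesis
    unfolding is_max_def
    by (simp add: avoiding_or_cofinite.negset_eq[OF avoiding_or_cofinite_empty A])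
qed

lemma meet_complemented_avoiding_or_cofinite:
  "meet_complemented_on (avoiding_or_cofinite p) (\<subseteq>)"
  unfolding meet_complemented_on_def
  by (metis avoiding_or_cofinite.lattice is_max_negset_pseudo_compl)

lemma lneg_avoiding_or_cofinite:
  "A \<in> avoiding_or_cofinite p \<Longrightarrow> lneg (avoiding_or_cofinite p) (\<subseteq>) A = pseudo_compl p A"
  unfolding lneg_def by (rule the_is_max_subset[OF is_max_negset_pseudo_compl])

lemma boxset_avoiding_or_cofinite:
  "boxset (avoiding_or_cofinite p) (\<subseteq>) (- {p}) = {B. p \<notin> B \<and> finite B}"
proof (rule set_eqI)
  fix B :: "'a set"
  show "B \<in> boxset (avoiding_or_cofinite p) (\<subseteq>) (- {p}) \<longleftrightarrow> B \<in> {B. p \<notin> B \<and> finite B}"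
  proof (cases "B \<in> avoiding_or_cofinite p")
    case True
    have "pseudo_compl p B \<in> avoiding_or_cofinite p"
      unfolding pseudo_compl_def by (auto intro: avoiding_or_cofinite_avoiding)
    moreover have "- {p} \<union> pseudo_compl p B = UNIV \<longleftrightarrow> p \<notin> B \<and> finite B"
      using True unfolding pseudo_compl_def avoiding_or_cofinite_def by auto
    ultimately show ?thesis
      using True
      by (simp add: boxset_def avoiding_or_cofinite.ltop_eq[OF avoiding_or_cofinite_UNIV]
          avoiding_or_cofinite.ljoin_eq avoiding_or_cofinite_avoiding lneg_avoiding_or_cofinite)
  next
    case False
    then show ?thesis
      by (auto simp: boxset_def intro: avoiding_or_cofinite_avoiding)
  qed
qed

lemma no_max_finite_avoiding:
  assumes "infinite (UNIV :: 'a set)"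
  shows "\<not> is_max (\<subseteq>) {B. (p :: 'a) \<notin> B \<and> finite B} x"
proof
  assume x: "is_max (\<subseteq>) {B. p \<notin> B \<and> finite B} x"
  hence "finite (insert p x)"
    unfolding is_max_def by simp
  then obtain y where y: "y \<notin> insert p x"
    using ex_new_if_finite[OF assms] by blast
  with x have "{y} \<subseteq> x"
    unfolding is_max_def by blast
  with y show False
    by simp
qed

theorem proposition14:
  shows "\<exists>(L :: nat set set) (le :: nat set \<Rightarrow> nat set \<Rightarrow> bool) a.
           infinite L \<and> distributive_lattice_on L le \<and> meet_complemented_on L le \<and>
           a \<in> L \<and> \<not> (\<exists>x. is_max le (boxset L le a) x)"
proof (intro exI conjI)
  show "infinite (avoiding_or_cofinite (0 :: nat))"
    by (rule infinite_avoiding_or_cofinite) simp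
  show "distributive_lattice_on (avoiding_or_cofinite 0) (\<subseteq>)"
    by (rule avoiding_or_cofinite.distributive_lattice)
  show "meet_complemented_on (avoiding_or_cofinite 0) (\<subseteq>)"
    by (rule meet_complemented_avoiding_or_cofinite)
  show "- {0} \<in> avoiding_or_cofinite 0"
    by (simp add: avoiding_or_cofinite_avoiding)
  show "\<not> (\<exists>x. is_max (\<subseteq>) (boxset (avoiding_or_cofinite 0) (\<subseteq>) (- {0 :: nat})) x)"
    using no_max_finite_avoiding[OF infinite_UNIV_nat] by (simp add: boxset_avoiding_or_cofinite)
qed

end
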